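(* Let $a,b,c,d>0$, $\mu\in(0,1]$, $u>(c+d)/2$, and consider on $\mathcal{I}=[0,1]^2$ the controlled system $$\dot x=x(1-x)\big[xr(-c+d-a+b)+x(a-b)-r(d+b)+b+u\big]+\mu(1-2x),\qquad \dot r=r(1-r)(2x-1).$$ Let $(x_t^*,1)$ be the equilibrium of this system on the side $\{r=1\}$ with $x_t^*\in(1/2,1)$. Then $(x_t^*,1)$ is locally asymptotically stable, while all other equilibria of the system (if any exist) are unstable.
   Context: For these parameters there is exactly one equilibrium $(x_t^*,1)$ on $\{(x,1):x\in[0,1]\}$ with $x_t^*\in(1/2,1)$; any other equilibria on that side lie in $\{(x,1):x\in(0,1/2)\}$. *)

theory Defs
  imports "HOL-Analysis.Analysis"
begin

definition ctrl_field :: "real \<Rightarrow> real \<Rightarrow> real \<Rightarrow> real \<Rightarrow> real \<Rightarrow> real \<Rightarrow> real \<times> real \<Rightarrow> real \<times> real" where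
  "ctrl_field a b c d \<mu> u = (\<lambda>(x, r).
     (x * (1 - x) * (x * r * (- c + d - a + b) + x * (a - b) - r * (d + b) + b + u) + \<mu> * (1 - 2 * x),
      r * (1 - r) * (2 * x - 1)))"

definition unit_square :: "(real \<times> real) set" where
  "unit_square = {0..1} \<times> {0..1}"

definition is_solution :: "('a::real_normed_vector \<Rightarrow> 'a) \<Rightarrow> 'a set \<Rightarrow> (real \<Rightarrow> 'a) \<Rightarrow> bool" where
  "is_solution f S \<phi> \<longleftrightarrow>
     (\<forall>t\<ge>0. (\<phi> has_vector_derivative f (\<phi> t)) (at t within {0..})) \<and> (\<forall>t\<ge>0. \<phi> t \<in> S)"

definition equilibrium :: "('a::real_normed_vector \<Rightarrow> 'a) \<Rightarrow> 'a set \<Rightarrow> 'a \<Rightarrow> bool" where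
  "equilibrium f S p \<longleftrightarrow> p \<in> S \<and> f p = 0"

definition lyapunov_stable :: "('a::real_normed_vector \<Rightarrow> 'a) \<Rightarrow> 'a set \<Rightarrow> 'a \<Rightarrow> bool" where
  "lyapunov_stable f S p \<longleftrightarrow>
     (\<forall>\<epsilon>>0. \<exists>\<delta>>0. \<forall>\<phi>. is_solution f S \<phi> \<and> dist (\<phi> 0) p < \<delta> \<longrightarrow> (\<forall>t\<ge>0. dist (\<phi> t) p < \<epsilon>))"

definition loc_asympt_stable :: "('a::real_normed_vector \<Rightarrow> 'a) \<Rightarrow> 'a set \<Rightarrow> 'a \<Rightarrow> bool" where
  "loc_asympt_stable f S p \<longleftrightarrow> lyapunov_stable f S p \<and>
     (\<exists>\<delta>>0. \<forall>\<phi>. is_solution f S \<phi> \<and> dist (\<phi> 0) p < \<delta> \<longrightarrow> (\<phi> \<longlongrightarrow> p) at_top)"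

definition unstable :: "('a::real_normed_vector \<Rightarrow> 'a) \<Rightarrow> 'a set \<Rightarrow> 'a \<Rightarrow> bool" where
  "unstable f S p \<longleftrightarrow> \<not> lyapunov_stable f S p"

end

(* Every equilibrium off the midline x = 1/2 lies on an edge r = 0 or r = 1. On the bottom edge the
   x-drift is positive for x <= 1/2; on the top edge it is a cubic vanishing at xs whose quotient by
   x - xs is negative on [1/2, 1]. Hence every equilibrium other than (xs, 1) sits on an edge where
   the factor 2x - 1 in r' pushes r away from that edge, so the distance to the edge grows
   exponentially along nearby solutions; these exist by a weighted Picard iteration for the field
   clamped to the square. At (xs, 1) the function V = (x - xs)^2 + K (1 - r) satisfies V' <= -gamma V
   on a sublevel set, which gives exponential decay and hence local asymptotic stability. *)

theory Submission
  imports Defs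
begin

lemma deriv_Ici_imp_continuous_on:
  fixes h h' :: "real \<Rightarrow> real"
  assumes "\<And>t. t \<ge> 0 \<Longrightarrow> (h has_real_derivative h' t) (at t within {0..})"
  shows "continuous_on {0..} h"
  unfolding continuous_on_eq_continuous_within
  using assms by (meson DERIV_continuous atLeast_iff)

lemma deriv_nonneg_imp_increasing_Ici:
  fixes h h' :: "real \<Rightarrow> real"
  assumes deriv: "\<And>t. t \<ge> 0 \<Longrightarrow> (h has_real_derivative h' t) (at t within {0..})"
    and "0 \<le> s" "s \<le> t" and nonneg: "\<And>\<tau>. s < \<tau> \<Longrightarrow> \<tau> < t \<Longrightarrow> h' \<tau> \<ge> 0"
  shows "h s \<le> h t"
proof (rule DERIV_nonneg_imp_increasing_open[OF \<open>s \<le> t\<close>])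
  fix \<tau> assume \<tau>: "s < \<tau>" "\<tau> < t"
  have "at \<tau> within {0..} = at \<tau>"
    by (rule at_within_open_subset[of \<tau> "{0<..}"]) (use \<tau> \<open>0 \<le> s\<close> in auto)
  then have "(h has_real_derivative h' \<tau>) (at \<tau>)"
    using deriv[of \<tau>] \<tau> \<open>0 \<le> s\<close> by simp
  then show "\<exists>y. (h has_real_derivative y) (at \<tau>) \<and> y \<ge> 0"
    using nonneg[OF \<tau>] by blast
next
  show "continuous_on {s..t} h"
    by (rule continuous_on_subset[OF deriv_Ici_imp_continuous_on[OF deriv]]) (use \<open>0 \<le> s\<close> in auto)
qed

lemma deriv_nonpos_above_imp_le_Ici:
  fixes h h' :: "real \<Rightarrow> real"
  assumes deriv: "\<And>t. t \<ge> 0 \<Longrightarrow> (h has_real_derivative h' t) (at t within {0..})"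
    and "h 0 \<le> c" and nonpos: "\<And>t. t \<ge> 0 \<Longrightarrow> h t > c \<Longrightarrow> h' t \<le> 0" and "t \<ge> 0"
  shows "h t \<le> c"
proof (rule ccontr)
  assume "\<not> h t \<le> c"
  define A where "A = {0..t} \<inter> h -` {..c}"
  have "closed A"
    unfolding A_def using deriv_Ici_imp_continuous_on[OF deriv]
    by (intro continuous_closed_preimage) (auto intro: continuous_on_subset)
  moreover have "0 \<in> A" using \<open>h 0 \<le> c\<close> \<open>t \<ge> 0\<close> unfolding A_def by auto
  moreover have bdd: "bdd_above A" unfolding A_def by (auto intro: bdd_aboveI[of _ t])
  ultimately have "Sup A \<in> A" by (intro closed_contains_Sup) auto
  then have last: "0 \<le> Sup A" "Sup A \<le> t" "h (Sup A) \<le> c" unfolding A_def by auto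
  have above: "h \<tau> > c" if "Sup A < \<tau>" "\<tau> \<le> t" for \<tau>
    using cSup_upper[OF _ bdd, of \<tau>] that \<open>0 \<le> Sup A\<close> unfolding A_def by force
  have "- h (Sup A) \<le> - h t"
    by (rule deriv_nonneg_imp_increasing_Ici[where h' = "\<lambda>\<tau>. - h' \<tau>"])
      (use DERIV_minus[OF deriv] nonpos above last in auto)
  then show False using last \<open>\<not> h t \<le> c\<close> by simp
qed

lemma deriv_inward_imp_stays_in_interval_Ici:
  fixes h h' :: "real \<Rightarrow> real"
  assumes deriv: "\<And>t. t \<ge> 0 \<Longrightarrow> (h has_real_derivative h' t) (at t within {0..})"
    and "h 0 \<in> {lo..hi}"
    and "\<And>t. t \<ge> 0 \<Longrightarrow> h t > hi \<Longrightarrow> h' t \<le> 0"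
    and "\<And>t. t \<ge> 0 \<Longrightarrow> h t < lo \<Longrightarrow> h' t \<ge> 0"
    and "t \<ge> 0"
  shows "h t \<in> {lo..hi}"
proof -
  have "h t \<le> hi"
    by (rule deriv_nonpos_above_imp_le_Ici[OF deriv]) (use assms in auto)
  moreover have "- h t \<le> - lo"
    by (rule deriv_nonpos_above_imp_le_Ici[where h' = "\<lambda>t. - h' t"])
      (use assms DERIV_minus[OF deriv] in auto)
  ultimately show ?thesis by simp
qed

lemma deriv_nonpos_below_imp_decreasing_Ici:
  fixes v v' :: "real \<Rightarrow> real"
  assumes deriv: "\<And>t. t \<ge> 0 \<Longrightarrow> (v has_real_derivative v' t) (at t within {0..})"
    and "v 0 < c" and nonpos: "\<And>t. t \<ge> 0 \<Longrightarrow> v t < c \<Longrightarrow> v' t \<le> 0" and "t \<ge> 0"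
  shows "v t \<le> v 0"
proof -
  have below: "v t < c" if "t \<ge> 0" for t
  proof (rule ccontr)
    assume "\<not> v t < c"
    define A where "A = {0..t} \<inter> v -` {c..}"
    have "closed A"
      unfolding A_def using deriv_Ici_imp_continuous_on[OF deriv]
      by (intro continuous_closed_preimage) (auto intro: continuous_on_subset)
    moreover have "t \<in> A" using \<open>\<not> v t < c\<close> \<open>t \<ge> 0\<close> unfolding A_def by auto
    moreover have bdd: "bdd_below A" unfolding A_def by (auto intro: bdd_belowI[of _ 0])
    ultimately have "Inf A \<in> A" by (intro closed_contains_Inf) auto
    then have first: "0 \<le> Inf A" "c \<le> v (Inf A)" unfolding A_def by auto
    have before: "v \<tau> < c" if "0 \<le> \<tau>" "\<tau> < Inf A" for \<tau>
      using cInf_lower[OF _ bdd, of \<tau>] that \<open>Inf A \<in> A\<close> unfolding A_def by force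
    have "- v 0 \<le> - v (Inf A)"
      by (rule deriv_nonneg_imp_increasing_Ici[where h' = "\<lambda>\<tau>. - v' \<tau>"])
        (use DERIV_minus[OF deriv] nonpos before first in auto)
    then show False using first \<open>v 0 < c\<close> by simp
  qed
  have "- v 0 \<le> - v t"
    by (rule deriv_nonneg_imp_increasing_Ici[where h' = "\<lambda>\<tau>. - v' \<tau>"])
      (use DERIV_minus[OF deriv] nonpos below \<open>t \<ge> 0\<close> in auto)
  then show ?thesis by simp
qed

lemma deriv_ge_mult_imp_exp_lower_bound_Ici:
  fixes s s' :: "real \<Rightarrow> real"
  assumes deriv: "\<And>t. t \<ge> 0 \<Longrightarrow> (s has_real_derivative s' t) (at t within {0..})"
    and growth: "\<And>t. t \<ge> 0 \<Longrightarrow> \<kappa> * s t \<le> s' t" and "t \<ge> 0"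
  shows "s 0 * exp (\<kappa> * t) \<le> s t"
proof -
  define w where "w t = s t * exp (- (\<kappa> * t))" for t
  have "w 0 \<le> w t"
  proof (rule deriv_nonneg_imp_increasing_Ici
      [where h = w and h' = "\<lambda>t. exp (- (\<kappa> * t)) * (s' t - \<kappa> * s t)"])
    show "(w has_real_derivative exp (- (\<kappa> * t)) * (s' t - \<kappa> * s t)) (at t within {0..})"
      if "t \<ge> 0" for t
      unfolding w_def using deriv[OF that] by (auto intro!: derivative_eq_intros simp: algebra_simps)
  qed (use growth \<open>t \<ge> 0\<close> in auto)
  then show ?thesis by (simp add: w_def exp_minus field_simps)
qed

lemma deriv_ge_mult_imp_unbounded_Ici:
  fixes s s' :: "real \<Rightarrow> real"
  assumes "\<And>t. t \<ge> 0 \<Longrightarrow> (s has_real_derivative s' t) (at t within {0..})"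
    and "\<And>t. t \<ge> 0 \<Longrightarrow> \<kappa> * s t \<le> s' t" and "\<kappa> > 0" "s 0 > 0"
  obtains t where "t \<ge> 0" "s t \<ge> c"
proof
  define T where "T = \<bar>c\<bar> / (\<kappa> * s 0)"
  show "T \<ge> 0" using assms(3,4) unfolding T_def by simp
  have "s 0 * (1 + \<kappa> * T) = s 0 + \<bar>c\<bar>"
    using assms(3,4) unfolding T_def by (simp add: field_simps)
  then have "c \<le> s 0 * (1 + \<kappa> * T)" using assms(4) by linarith
  also have "\<dots> \<le> s 0 * exp (\<kappa> * T)"
    using assms(4) exp_ge_add_one_self[of "\<kappa> * T"] by (intro mult_left_mono) auto
  also have "\<dots> \<le> s T"
    by (rule deriv_ge_mult_imp_exp_lower_bound_Ici[OF assms(1,2) \<open>T \<ge> 0\<close>])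
  finally show "s T \<ge> c" .
qed

lemma has_vector_derivative_fst:
  assumes "(\<phi> has_vector_derivative v) F"
  shows "((\<lambda>t. fst (\<phi> t)) has_real_derivative fst v) F"
proof -
  have "((\<lambda>t. fst (\<phi> t)) has_derivative (\<lambda>h. fst (h *\<^sub>R v))) F"
    using assms unfolding has_vector_derivative_def by (rule has_derivative_fst)
  moreover have "(\<lambda>h. fst (h *\<^sub>R v)) = (*) (fst v)" by (auto simp: fun_eq_iff)
  ultimately show ?thesis unfolding has_field_derivative_def by simp
qed

lemma has_vector_derivative_snd:
  assumes "(\<phi> has_vector_derivative v) F"
  shows "((\<lambda>t. snd (\<phi> t)) has_real_derivative snd v) F"
proof -
  have "((\<lambda>t. snd (\<phi> t)) has_derivative (\<lambda>h. snd (h *\<^sub>R v))) F"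
    using assms unfolding has_vector_derivative_def by (rule has_derivative_snd)
  moreover have "(\<lambda>h. snd (h *\<^sub>R v)) = (*) (snd v)" by (auto simp: fun_eq_iff)
  ultimately show ?thesis unfolding has_field_derivative_def by simp
qed

lemma is_solution_has_real_derivative:
  assumes "is_solution f S \<phi>" "t \<ge> 0"
  shows "((\<lambda>t. fst (\<phi> t)) has_real_derivative fst (f (\<phi> t))) (at t within {0..})"
    and "((\<lambda>t. snd (\<phi> t)) has_real_derivative snd (f (\<phi> t))) (at t within {0..})"
  using assms has_vector_derivative_fst has_vector_derivative_snd unfolding is_solution_def by blast+

lemma integral_Ici_has_vector_derivative:
  fixes h :: "real \<Rightarrow> 'a::banach"
  assumes "continuous_on UNIV h" "t \<ge> 0"
  shows "((\<lambda>\<tau>. integral {0..\<tau>} h) has_vector_derivative h t) (at t within {0..})"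
proof -
  have "((\<lambda>\<tau>. integral {0..\<tau>} h) has_vector_derivative h t) (at t within {0..t+1})"
    by (rule integral_has_vector_derivative) (use assms in \<open>auto intro: continuous_on_subset\<close>)
  moreover have "at t within {0..} = at t within {0..t+1}"
    by (rule at_within_nhd[of t "{..<t+1}"]) (use assms in auto)
  ultimately show ?thesis by simp
qed

lemma integral_Ici_continuous_on:
  fixes h :: "real \<Rightarrow> 'a::banach"
  assumes "continuous_on UNIV h"
  shows "continuous_on {0..} (\<lambda>\<tau>. integral {0..\<tau>} h)"
  unfolding continuous_on_eq_continuous_within
  using integral_Ici_has_vector_derivative[OF assms] has_vector_derivative_continuous
  by (metis atLeast_iff)

lemma has_integral_exp_mult:
  fixes k \<tau> :: real
  assumes "k \<noteq> 0" "\<tau> \<ge> 0"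
  shows "((\<lambda>s. exp (k * s)) has_integral (exp (k * \<tau>) - 1) / k) {0..\<tau>}"
proof -
  have "((\<lambda>s. exp (k * s)) has_integral exp (k * \<tau>) / k - exp (k * 0) / k) {0..\<tau>}"
    using assms by (intro fundamental_theorem_of_calculus)
      (auto intro!: derivative_eq_intros simp flip: has_real_derivative_iff_has_vector_derivative)
  then show ?thesis by (simp add: diff_divide_distrib)
qed

text \<open>The Picard operator conjugated by the weight \<open>exp (2 L t)\<close> (Bielecki's trick): a fixed
  point \<open>g\<close> yields the solution \<open>t \<mapsto> exp (2 L t) g t\<close>, and the weight turns the operator into a
  contraction for the sup norm on all of \<open>[0, \<infinity>)\<close> at once.\<close>
definition weighted_picard :: "('a::banach \<Rightarrow> 'a) \<Rightarrow> real \<Rightarrow> 'a \<Rightarrow> (real \<Rightarrow> 'a) \<Rightarrow> real \<Rightarrow> 'a" where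
  "weighted_picard F L p0 g t = exp (- (2 * L * max t 0)) *\<^sub>R
     (p0 + integral {0..max t 0} (\<lambda>s. F (exp (2 * L * s) *\<^sub>R g s)))"

lemma weighted_integrand_continuous_on:
  fixes F :: "'a::real_normed_vector \<Rightarrow> 'b::topological_space"
  assumes "continuous_on UNIV F" "continuous_on UNIV g"
  shows "continuous_on UNIV (\<lambda>s. F (exp (2 * L * s) *\<^sub>R g s))"
proof -
  have "continuous_on UNIV (\<lambda>s. exp (2 * L * s) *\<^sub>R g s)"
    by (intro continuous_intros assms(2))
  then show ?thesis by (rule continuous_on_compose2[OF assms(1)]) auto
qed

lemma weighted_picard_continuous_on:
  assumes "continuous_on UNIV F" "continuous_on UNIV g"
  shows "continuous_on UNIV (weighted_picard F L p0 g)"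
  unfolding weighted_picard_def [abs_def]
  by (intro continuous_intros continuous_on_compose2[OF integral_Ici_continuous_on]
      weighted_integrand_continuous_on assms) auto

lemma weighted_picard_bounded:
  assumes "L > 0" and bound: "\<And>z. norm (F z) \<le> M" and "continuous_on UNIV F" "continuous_on UNIV g"
  shows "norm (weighted_picard F L p0 g t) \<le> norm p0 + M / (2 * L)"
proof -
  define \<tau> where "\<tau> = max t 0"
  have "\<tau> \<ge> 0" "M \<ge> 0" using order_trans[OF norm_ge_zero bound] unfolding \<tau>_def by auto
  have "norm (integral {0..\<tau>} (\<lambda>s. F (exp (2 * L * s) *\<^sub>R g s))) \<le> integral {0..\<tau>} (\<lambda>s. M)"
    by (rule integral_norm_bound_integral)
      (auto intro!: integrable_continuous_real bound
        continuous_on_subset[OF weighted_integrand_continuous_on[OF assms(3,4)]])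
  also have "\<dots> = M * \<tau>" using \<open>\<tau> \<ge> 0\<close> by simp
  finally have int: "norm (integral {0..\<tau>} (\<lambda>s. F (exp (2 * L * s) *\<^sub>R g s))) \<le> M * \<tau>" .
  have exp_ge: "1 + 2 * L * \<tau> \<le> exp (2 * L * \<tau>)" by (rule exp_ge_add_one_self)
  have "norm (weighted_picard F L p0 g t)
      = norm (p0 + integral {0..\<tau>} (\<lambda>s. F (exp (2 * L * s) *\<^sub>R g s))) / exp (2 * L * \<tau>)"
    unfolding weighted_picard_def \<tau>_def[symmetric] by (simp add: exp_minus divide_inverse_commute)
  also have "\<dots> \<le> (norm p0 + M * \<tau>) / exp (2 * L * \<tau>)"
    using int by (intro divide_right_mono norm_triangle_le) auto
  also have "\<dots> \<le> norm p0 + M / (2 * L)"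
    unfolding add_divide_distrib
  proof (rule add_mono)
    show "norm p0 / exp (2 * L * \<tau>) \<le> norm p0"
      using exp_ge \<open>L > 0\<close> \<open>\<tau> \<ge> 0\<close> by (simp add: divide_le_eq mult_le_cancel_left1)
    have "M * (2 * L * \<tau>) \<le> M * exp (2 * L * \<tau>)"
      by (rule mult_left_mono) (use exp_ge \<open>M \<ge> 0\<close> in linarith)+
    then show "M * \<tau> / exp (2 * L * \<tau>) \<le> M / (2 * L)"
      using \<open>L > 0\<close> by (simp add: divide_simps mult_ac)
  qed
  finally show ?thesis .
qed

lemma weighted_picard_contraction:
  fixes F :: "'a::banach \<Rightarrow> 'a"
  assumes "L > 0" and lip: "L-lipschitz_on UNIV F" and cont: "continuous_on UNIV g1" "continuous_on UNIV g2"
    and close: "\<And>s. dist (g1 s) (g2 s) \<le> D"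
  shows "dist (weighted_picard F L p0 g1 t) (weighted_picard F L p0 g2 t) \<le> D / 2"
proof -
  define \<tau> where "\<tau> = max t 0"
  define h where "h g s = F (exp (2 * L * s) *\<^sub>R g s)" for g s
  have "\<tau> \<ge> 0" "D \<ge> 0" using order_trans[OF zero_le_dist close] unfolding \<tau>_def by auto
  have int: "h g integrable_on {0..\<tau>}" if "continuous_on UNIV g" for g
    unfolding h_def
    by (intro integrable_continuous_real continuous_on_subset[OF weighted_integrand_continuous_on]
        lipschitz_on_continuous_on[OF lip] that) auto
  have "norm (h g1 s - h g2 s) \<le> L * D * exp (2 * L * s)" for s
  proof -
    have "norm (h g1 s - h g2 s) \<le> L * dist (exp (2 * L * s) *\<^sub>R g1 s) (exp (2 * L * s) *\<^sub>R g2 s)"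
      unfolding h_def dist_norm[symmetric] by (rule lipschitz_onD[OF lip]) auto
    also have "\<dots> = L * exp (2 * L * s) * dist (g1 s) (g2 s)"
      by (simp add: dist_norm flip: scaleR_diff_right)
    also have "\<dots> \<le> L * exp (2 * L * s) * D"
      using \<open>L > 0\<close> close by (intro mult_left_mono) auto
    finally show ?thesis by (simp add: mult_ac)
  qed
  then have "norm (integral {0..\<tau>} (\<lambda>s. h g1 s - h g2 s))
      \<le> integral {0..\<tau>} (\<lambda>s. L * D * exp (2 * L * s))"
    by (intro integral_norm_bound_integral integrable_diff int cont integrable_continuous_real
        continuous_intros) auto
  also have "\<dots> = L * D * ((exp (2 * L * \<tau>) - 1) / (2 * L))"
    by (intro integral_unique has_integral_mult_right has_integral_exp_mult)
      (use \<open>L > 0\<close> \<open>\<tau> \<ge> 0\<close> in auto)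
  also have "\<dots> = D / 2 * (exp (2 * L * \<tau>) - 1)" using \<open>L > 0\<close> by simp
  finally have "norm (integral {0..\<tau>} (h g1) - integral {0..\<tau>} (h g2))
      \<le> D / 2 * (exp (2 * L * \<tau>) - 1)"
    by (simp add: integral_diff int cont)
  then have "exp (- (2 * L * \<tau>)) * norm (integral {0..\<tau>} (h g1) - integral {0..\<tau>} (h g2))
      \<le> exp (- (2 * L * \<tau>)) * (D / 2 * (exp (2 * L * \<tau>) - 1))"
    by (intro mult_left_mono) auto
  also have "\<dots> \<le> D / 2"
    using \<open>D \<ge> 0\<close> by (simp add: exp_minus field_simps)
  finally show ?thesis
    unfolding weighted_picard_def \<tau>_def[symmetric] h_def dist_norm
    by (simp add: scaleR_diff_right[symmetric])
qed

lemma weighted_picard_fixpoint_solves: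
  fixes F :: "'a::banach \<Rightarrow> 'a"
  assumes "continuous_on UNIV F" "continuous_on UNIV g" and fixed: "weighted_picard F L p0 g = g"
    and "t \<ge> 0"
  shows "((\<lambda>t. exp (2 * L * t) *\<^sub>R g t) has_vector_derivative F (exp (2 * L * t) *\<^sub>R g t))
    (at t within {0..})"
proof (rule has_vector_derivative_transform)
  show "exp (2 * L * s) *\<^sub>R g s = p0 + integral {0..s} (\<lambda>s. F (exp (2 * L * s) *\<^sub>R g s))"
    if "s \<in> {0..}" for s
  proof -
    have "g s = exp (- (2 * L * s)) *\<^sub>R (p0 + integral {0..s} (\<lambda>s. F (exp (2 * L * s) *\<^sub>R g s)))"
      using fun_cong[OF fixed, of s] that by (simp add: weighted_picard_def)
    then show ?thesis by (simp flip: exp_add)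
  qed
  show "((\<lambda>s. p0 + integral {0..s} (\<lambda>s. F (exp (2 * L * s) *\<^sub>R g s))) has_vector_derivative
      F (exp (2 * L * t) *\<^sub>R g t)) (at t within {0..})"
    unfolding add.commute[of p0] has_vector_derivative_add_const
    by (intro integral_Ici_has_vector_derivative weighted_integrand_continuous_on assms)
qed (use \<open>t \<ge> 0\<close> in auto)

lemma lipschitz_bounded_ode_has_solution:
  fixes F :: "'a::banach \<Rightarrow> 'a"
  assumes lip: "L-lipschitz_on UNIV F" and "bounded (range F)"
  obtains \<phi> where "\<phi> 0 = p0" "\<And>t. t \<ge> 0 \<Longrightarrow> (\<phi> has_vector_derivative F (\<phi> t)) (at t within {0..})"
proof -
  define L' where "L' = L + 1"
  have "L' > 0" "L'-lipschitz_on UNIV F"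
    using lipschitz_on_nonneg[OF lip] lipschitz_on_mono[OF lip] unfolding L'_def by auto
  obtain M where M: "\<And>z. norm (F z) \<le> M" using \<open>bounded (range F)\<close> by (auto simp: bounded_iff)
  have contF: "continuous_on UNIV F" by (rule lipschitz_on_continuous_on[OF lip])
  define T where "T g = Bcontfun (weighted_picard F L' p0 (apply_bcontfun g))" for g :: "real \<Rightarrow>\<^sub>C 'a"
  have T: "apply_bcontfun (T g) = weighted_picard F L' p0 (apply_bcontfun g)" for g
    unfolding T_def
    by (intro Bcontfun_inverse bcontfun_normI[where b = "norm p0 + M / (2 * L')"]
        weighted_picard_continuous_on weighted_picard_bounded
        \<open>L' > 0\<close> M contF) auto
  have "dist (T g1) (T g2) \<le> 1/2 * dist g1 g2" for g1 g2
    using weighted_picard_contraction[OF \<open>L' > 0\<close> \<open>L'-lipschitz_on UNIV F\<close>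
        continuous_on_apply_bcontfun continuous_on_apply_bcontfun dist_bounded[of g1 _ g2]]
    by (intro dist_bound) (simp add: T)
  then obtain g where "T g = g" using banach_fix_type[of "1/2" T] by auto
  then have fixed: "weighted_picard F L' p0 (apply_bcontfun g) = apply_bcontfun g" using T by metis
  have "apply_bcontfun g 0 = p0"
    using fun_cong[OF fixed, of 0] by (simp add: weighted_picard_def)
  then show ?thesis
    using weighted_picard_fixpoint_solves[OF contF continuous_on_apply_bcontfun fixed]
    by (intro that[of "\<lambda>t. exp (2 * L' * t) *\<^sub>R apply_bcontfun g t"]) auto
qed

lemma lipschitz_on_mult_compact:
  fixes f g :: "'a::metric_space \<Rightarrow> 'b::real_normed_algebra"
  assumes "compact U" and f: "L-lipschitz_on U f" and g: "M-lipschitz_on U g"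
  shows "\<exists>K. K-lipschitz_on U (\<lambda>x. f x * g x)"
proof -
  have "compact (f ` U)" "compact (g ` U)"
    using \<open>compact U\<close> lipschitz_on_continuous_on[OF f] lipschitz_on_continuous_on[OF g]
    by (auto intro: compact_continuous_image)
  then obtain A B where "A > 0" "B > 0" and A: "\<forall>x\<in>U. norm (f x) \<le> A" and B: "\<forall>x\<in>U. norm (g x) \<le> B"
    by (auto dest!: compact_imp_bounded simp: bounded_pos)
  have "(A * M + B * L)-lipschitz_on U (\<lambda>x. f x * g x)"
  proof (rule lipschitz_onI)
    fix x y assume "x \<in> U" "y \<in> U"
    have "dist (f x * g x) (f y * g y) = norm (f x * (g x - g y) + (f x - f y) * g y)"
      by (simp add: dist_norm algebra_simps)
    also have "\<dots> \<le> norm (f x) * dist (g x) (g y) + dist (f x) (f y) * norm (g y)"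
      by (rule order_trans[OF norm_triangle_ineq add_mono]) (auto simp: dist_norm norm_mult_ineq)
    also have "\<dots> \<le> A * (M * dist x y) + (L * dist x y) * B"
      using \<open>x \<in> U\<close> \<open>y \<in> U\<close> \<open>A > 0\<close> lipschitz_on_nonneg[OF f] lipschitz_on_nonneg[OF g]
      by (intro add_mono mult_mono lipschitz_onD[OF f] lipschitz_onD[OF g]) (auto simp: A B)
    finally show "dist (f x * g x) (f y * g y) \<le> (A * M + B * L) * dist x y"
      by (simp add: algebra_simps)
  next
    show "0 \<le> A * M + B * L"
      using \<open>A > 0\<close> \<open>B > 0\<close> lipschitz_on_nonneg[OF f] lipschitz_on_nonneg[OF g] by simp
  qed
  then show ?thesis ..
qed

lemma real_polynomial_function_lipschitz_on_compact:
  assumes "real_polynomial_function f" "compact U"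
  shows "\<exists>L. L-lipschitz_on U f"
  using assms(1)
proof (induction f rule: real_polynomial_function.induct)
  case (linear f)
  then show ?case by (metis bounded_linear.lipschitz_boundE)
next
  case (const c)
  then show ?case using lipschitz_on_constant by blast
next
  case (add f g)
  then show ?case using lipschitz_on_add by blast
next
  case (mult f g)
  then show ?case using lipschitz_on_mult_compact[OF \<open>compact U\<close>] by blast
qed

lemma unit_square_eq_cbox: "unit_square = cbox (0, 0) (1, 1)"
  by (simp add: unit_square_def cbox_Pair_eq)

lemma clamp_Pair:
  fixes x y :: real
  assumes "a \<le> b" "c \<le> d"
  shows "clamp (a, c) (b, d) (x, y) = (clamp a b x, clamp c d y)"
  using assms by (auto simp: clamp_def Basis_prod_def sum.union_disjoint inner_prod_def)

lemma clamp_real: "a \<le> b \<Longrightarrow> clamp a b (x::real) = (if x < a then a else if x \<le> b then x else b)"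
  by (simp add: clamp_def)

lemma ctrl_field_lipschitz_on: "\<exists>L. L-lipschitz_on unit_square (ctrl_field a b c d \<mu> u)"
proof -
  have compact: "compact unit_square" unfolding unit_square_eq_cbox by simp
  have poly: "real_polynomial_function (\<lambda>z. fst (ctrl_field a b c d \<mu> u z))"
    "real_polynomial_function (\<lambda>z. snd (ctrl_field a b c d \<mu> u z))"
    unfolding ctrl_field_def case_prod_beta fst_conv snd_conv
    by (intro real_polynomial_function_diff real_polynomial_function.intros(2-4)
        real_polynomial_function.intros(1)[OF bounded_linear_fst]
        real_polynomial_function.intros(1)[OF bounded_linear_snd])+
  obtain L1 L2 where "L1-lipschitz_on unit_square (\<lambda>z. fst (ctrl_field a b c d \<mu> u z))"
    "L2-lipschitz_on unit_square (\<lambda>z. snd (ctrl_field a b c d \<mu> u z))"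
    using real_polynomial_function_lipschitz_on_compact[OF poly(1) compact]
      real_polynomial_function_lipschitz_on_compact[OF poly(2) compact] by blast
  from lipschitz_on_Pair[OF this] show ?thesis by auto
qed

lemma lipschitz_on_clamp:
  fixes F :: "'a::euclidean_space \<Rightarrow> 'b::metric_space"
  assumes "L-lipschitz_on (cbox a b) F" "\<forall>i\<in>Basis. a \<bullet> i \<le> b \<bullet> i"
  shows "L-lipschitz_on UNIV (\<lambda>z. F (clamp a b z))"
proof -
  have "1-lipschitz_on UNIV (clamp a b)"
    by (rule lipschitz_onI) (auto simp: dist_clamps_le_dist_args)
  moreover have "L-lipschitz_on (range (clamp a b)) F"
    using assms by (auto intro: lipschitz_on_subset)
  ultimately show ?thesis using lipschitz_on_compose2 by fastforce
qed

lemma bounded_range_clamp: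
  fixes F :: "'a::euclidean_space \<Rightarrow> 'b::metric_space"
  assumes "L-lipschitz_on (cbox a b) F"
  shows "bounded (range (\<lambda>z. F (clamp a b z)))"
  using lipschitz_on_continuous_on[OF assms]
  by (intro clamp_bounded compact_imp_bounded compact_continuous_image) auto

text \<open>The field is Lipschitz only on the square, so we solve the system for the field composed
  with the projection onto the square. The projected field points inwards wherever the solution
  leaves the square, so it never does, and there the two fields agree.\<close>
lemma ctrl_field_solution_exists:
  assumes "\<mu> \<ge> 0" "p0 \<in> unit_square"
  obtains \<phi> where "\<phi> 0 = p0" "is_solution (ctrl_field a b c d \<mu> u) unit_square \<phi>"
proof -
  define F where "F = ctrl_field a b c d \<mu> u"
  define G where "G z = F (clamp (0, 0) (1, 1) z)" for z
  obtain L where "L-lipschitz_on (cbox (0, 0) (1, 1)) F"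
    using ctrl_field_lipschitz_on unfolding F_def unit_square_eq_cbox by blast
  moreover have "\<forall>i\<in>Basis. (0, 0) \<bullet> i \<le> (1, 1) \<bullet> (i :: real \<times> real)"
    by (auto simp: Basis_prod_def)
  ultimately have "L-lipschitz_on UNIV G" "bounded (range G)"
    unfolding G_def using lipschitz_on_clamp bounded_range_clamp by blast+
  then obtain \<phi> where "\<phi> 0 = p0"
    and deriv: "\<And>t. t \<ge> 0 \<Longrightarrow> (\<phi> has_vector_derivative G (\<phi> t)) (at t within {0..})"
    using lipschitz_bounded_ode_has_solution by metis
  have G_Pair: "G (x, r) = F (clamp 0 1 x, clamp 0 1 r)" for x r
    by (simp add: G_def clamp_Pair)
  have G_left: "fst (G z) = - \<mu>" if "fst z > 1" for z
    using that by (cases z) (simp add: G_Pair clamp_real F_def ctrl_field_def)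
  have G_right: "fst (G z) = \<mu>" if "fst z < 0" for z
    using that by (cases z) (simp add: G_Pair clamp_real F_def ctrl_field_def)
  have G_vertical: "snd (G z) = 0" if "snd z > 1 \<or> snd z < 0" for z
    using that by (cases z) (auto simp: G_Pair clamp_real F_def ctrl_field_def)
  have "fst (\<phi> t) \<in> {0..1}" if "t \<ge> 0" for t
    by (rule deriv_inward_imp_stays_in_interval_Ici[OF has_vector_derivative_fst[OF deriv]])
      (use G_left G_right \<open>\<phi> 0 = p0\<close> \<open>p0 \<in> unit_square\<close> \<open>\<mu> \<ge> 0\<close> that in
        \<open>auto simp: unit_square_def\<close>)
  moreover have "snd (\<phi> t) \<in> {0..1}" if "t \<ge> 0" for t
    by (rule deriv_inward_imp_stays_in_interval_Ici[OF has_vector_derivative_snd[OF deriv]])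
      (use G_vertical \<open>\<phi> 0 = p0\<close> \<open>p0 \<in> unit_square\<close> that in \<open>auto simp: unit_square_def\<close>)
  ultimately have in_square: "\<phi> t \<in> unit_square" if "t \<ge> 0" for t
    using that unfolding unit_square_def by (simp add: mem_Times_iff)
  then have "G (\<phi> t) = F (\<phi> t)" if "t \<ge> 0" for t
    using that unfolding G_def unit_square_eq_cbox by simp
  with deriv in_square have "is_solution F unit_square \<phi>"
    unfolding is_solution_def by simp
  then show ?thesis
    using that \<open>\<phi> 0 = p0\<close> unfolding F_def by blast
qed

definition top_edge_drift :: "real \<Rightarrow> real \<Rightarrow> real \<Rightarrow> real \<Rightarrow> real \<Rightarrow> real" where
  "top_edge_drift c d \<mu> u x = x * (1 - x) * (x * (d - c) + u - d) + \<mu> * (1 - 2 * x)"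

lemma fst_ctrl_field_eq:
  "fst (ctrl_field a b c d \<mu> u (x, r)) =
     top_edge_drift c d \<mu> u x + (1 - r) * (x * (1 - x) * ((d + b) * (1 - x) + x * (c + a)))"
  unfolding ctrl_field_def top_edge_drift_def by (simp add: algebra_simps)

text \<open>The quotient of the cubic \<open>top_edge_drift\<close> by \<open>x - xs\<close>, expanded in powers of \<open>x - 1/2\<close>.\<close>
definition top_edge_quotient :: "real \<Rightarrow> real \<Rightarrow> real \<Rightarrow> real \<Rightarrow> real \<Rightarrow> real \<Rightarrow> real" where
  "top_edge_quotient c d \<mu> u xs x =
     (c - d) * (x - 1/2)^2 + ((c - d) * (xs - 1/2) - (u - (c + d) / 2)) * (x - 1/2)
     + ((c - d) * (xs - 1/2)^2 - (u - (c + d) / 2) * (xs - 1/2) - (c - d) / 4 - 2 * \<mu>)"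

lemma top_edge_drift_diff:
  "top_edge_drift c d \<mu> u x - top_edge_drift c d \<mu> u xs = (x - xs) * top_edge_quotient c d \<mu> u xs x"
  unfolding top_edge_drift_def top_edge_quotient_def
  by (simp add: field_simps power2_eq_square)

lemma quadratic_le_max_endpoints:
  fixes A B C y l :: real
  assumes "0 \<le> A \<or> B \<le> 0" "0 \<le> y" "y \<le> l"
  shows "A * y^2 + B * y + C \<le> max C (A * l^2 + B * l + C)"
proof (cases "0 \<le> A")
  case True
  have "A * y^2 \<le> A * l * y"
    using True assms by (simp add: power2_eq_square mult_left_mono mult_right_mono mult.assoc)
  moreover have "(A * l + B) * y \<le> max 0 ((A * l + B) * l)"
    using assms by (cases "A * l + B \<ge> 0") (simp_all add: mult_left_mono mult_nonpos_nonneg)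
  ultimately show ?thesis by (auto simp: algebra_simps power2_eq_square max_def)
next
  case False
  then have "A * y^2 \<le> 0" "B * y \<le> 0"
    using assms by (auto intro: mult_nonpos_nonneg)
  then show ?thesis by simp
qed

lemma top_edge_quotient_neg:
  assumes "u > (c + d) / 2" "\<mu> > 0" "1/2 < xs" "xs < 1" "top_edge_drift c d \<mu> u xs = 0"
  obtains \<alpha> where "\<alpha> > 0" "\<And>x. 1/2 \<le> x \<Longrightarrow> x \<le> 1 \<Longrightarrow> top_edge_quotient c d \<mu> u xs x \<le> - \<alpha>"
proof
  let ?Q = "top_edge_quotient c d \<mu> u xs"
  have half: "(1/2 - xs) * ?Q (1/2) = (u - (c + d) / 2) / 4"
    using top_edge_drift_diff[of c d \<mu> u "1/2" xs] assms(5) by (simp add: top_edge_drift_def field_simps)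
  have "(u - (c + d) / 2) / 4 > 0" using assms(1) by simp
  then have "(1/2 - xs) * ?Q (1/2) > 0" unfolding half .
  then have "?Q (1/2) < 0"
    using assms(3) by (simp add: zero_less_mult_iff)
  moreover have "(1 - xs) * ?Q 1 = - \<mu>"
    using top_edge_drift_diff[of c d \<mu> u 1 xs] assms(5) by (simp add: top_edge_drift_def)
  then have "(1 - xs) * ?Q 1 < 0" using assms(2) by simp
  then have "?Q 1 < 0"
    using assms(4) by (simp add: mult_less_0_iff)
  ultimately show "- max (?Q (1/2)) (?Q 1) > 0" by simp
  fix x :: real assume "1/2 \<le> x" "x \<le> 1"
  have "(c - d) * (xs - 1/2) - (u - (c + d) / 2) \<le> 0" if "c - d < 0"
  proof -
    have "(c - d) * (xs - 1/2) \<le> 0" using that assms(3) by (intro mult_nonpos_nonneg) auto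
    then show ?thesis using assms(1) by linarith
  qed
  then have "?Q x \<le> max (?Q (1/2)) (?Q 1)"
    using quadratic_le_max_endpoints[of "c - d" "(c - d) * (xs - 1/2) - (u - (c + d) / 2)" "x - 1/2" "1/2"]
      \<open>1/2 \<le> x\<close> \<open>x \<le> 1\<close> unfolding top_edge_quotient_def by fastforce
  then show "?Q x \<le> - (- max (?Q (1/2)) (?Q 1))" by simp
qed

lemma ctrl_field_equilibrium_off_midline:
  assumes "a > 0" "b > 0" "c > 0" "d > 0" "u > (c + d) / 2"
    and "equilibrium (ctrl_field a b c d \<mu> u) unit_square (x, r)"
  shows "x \<noteq> 1/2" "r = 0 \<or> r = 1"
proof -
  have "r \<le> 1" using assms(6) by (simp add: equilibrium_def unit_square_def)
  have "fst (ctrl_field a b c d \<mu> u (1/2, r)) = (u - (c + d) / 2) / 4 + (1 - r) * (a + b + c + d) / 8"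
    unfolding fst_ctrl_field_eq top_edge_drift_def by (simp add: field_simps)
  also have "\<dots> > 0" using assms(1-5) \<open>r \<le> 1\<close> by (simp add: add_pos_nonneg)
  finally have "ctrl_field a b c d \<mu> u (1/2, r) \<noteq> 0" by auto
  then show "x \<noteq> 1/2" using assms(6) unfolding equilibrium_def by blast
  then show "r = 0 \<or> r = 1"
    using assms(6) by (auto simp: equilibrium_def ctrl_field_def zero_prod_def)
qed

lemma ctrl_field_equilibrium_bottom_edge:
  assumes "a > 0" "b > 0" "c > 0" "d > 0" "\<mu> > 0" "u > (c + d) / 2"
    and "equilibrium (ctrl_field a b c d \<mu> u) unit_square (x, 0)"
  shows "x > 1/2"
proof (rule ccontr)
  assume "\<not> x > 1/2"
  moreover have "x \<noteq> 1/2" "0 \<le> x"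
    using ctrl_field_equilibrium_off_midline[OF assms(1-4,6,7)] assms(7)
    by (auto simp: equilibrium_def unit_square_def)
  ultimately have "x * (1 - x) * (x * a + (1 - x) * b + u) \<ge> 0" "\<mu> * (1 - 2 * x) > 0"
    using assms(1,2,3,4,5,6) by (auto intro!: mult_nonneg_nonneg add_nonneg_nonneg)
  moreover have "fst (ctrl_field a b c d \<mu> u (x, 0)) =
      x * (1 - x) * (x * a + (1 - x) * b + u) + \<mu> * (1 - 2 * x)"
    unfolding ctrl_field_def by (simp add: algebra_simps)
  ultimately show False using assms(7) by (simp add: equilibrium_def)
qed

lemma ctrl_field_equilibrium_top_edge:
  assumes "a > 0" "b > 0" "c > 0" "d > 0" "\<mu> > 0" "u > (c + d) / 2"
    and "1/2 < xs" "xs < 1" "top_edge_drift c d \<mu> u xs = 0"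
    and "equilibrium (ctrl_field a b c d \<mu> u) unit_square (x, 1)"
  shows "x < 1/2 \<or> x = xs"
proof (rule ccontr)
  assume "\<not> (x < 1/2 \<or> x = xs)"
  moreover have "x \<noteq> 1/2" "x \<le> 1"
    using ctrl_field_equilibrium_off_midline[OF assms(1-4,6,10)] assms(10)
    by (auto simp: equilibrium_def unit_square_def)
  moreover obtain \<alpha> where "\<alpha> > 0" "\<And>x. 1/2 \<le> x \<Longrightarrow> x \<le> 1 \<Longrightarrow> top_edge_quotient c d \<mu> u xs x \<le> - \<alpha>"
    using top_edge_quotient_neg[OF assms(6,5,7-9)] by blast
  ultimately have "(x - xs) * top_edge_quotient c d \<mu> u xs x \<noteq> 0" by force
  moreover have "top_edge_drift c d \<mu> u x = 0"
    using assms(10) fst_ctrl_field_eq[of a b c d \<mu> u x 1] by (simp add: equilibrium_def)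
  ultimately show False using top_edge_drift_diff[of c d \<mu> u x xs] assms(9) by simp
qed

lemma ctrl_field_edge_repulsion:
  assumes "r0 = 0 \<or> r0 = 1" "0 \<le> r" "r \<le> 1" "(1 - 2 * r0) * (r - r0) \<le> 1/2"
    and "0 \<le> \<beta>" "\<beta> \<le> 2 * ((1 - 2 * r0) * (2 * x - 1))"
  shows "\<beta> / 4 * ((1 - 2 * r0) * (r - r0)) \<le> (1 - 2 * r0) * snd (ctrl_field a b c d \<mu> u (x, r))"
proof -
  define s where "s = (1 - 2 * r0) * (r - r0)"
  have s: "0 \<le> s" "r * (1 - r) = s * (1 - s)"
    using assms(1-3) unfolding s_def by (auto simp: algebra_simps)
  have "(1/2) * (\<beta> / 2) \<le> (1 - s) * ((1 - 2 * r0) * (2 * x - 1))"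
    using assms(4-6) unfolding s_def by (intro mult_mono) auto
  then have "s * ((1/2) * (\<beta> / 2)) \<le> s * ((1 - s) * ((1 - 2 * r0) * (2 * x - 1)))"
    using s(1) by (rule mult_left_mono)
  moreover have "(1 - 2 * r0) * snd (ctrl_field a b c d \<mu> u (x, r)) = (1 - 2 * r0) * (r * (1 - r)) * (2 * x - 1)"
    by (simp add: ctrl_field_def mult.assoc)
  ultimately show ?thesis unfolding s(2) s_def[symmetric] by (simp add: algebra_simps)
qed

text \<open>With \<open>\<sigma> = 1 - 2 r0\<close>, the quantity \<open>\<sigma> (r - r0)\<close> is the distance to the edge \<open>r = r0\<close>;
  near \<open>(x0, r0)\<close> it grows at least exponentially, so solutions started just off the edge leave
  every small neighbourhood.\<close>
lemma ctrl_field_edge_equilibrium_unstable: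
  assumes "\<mu> > 0" "r0 = 0 \<or> r0 = 1" "0 \<le> x0" "x0 \<le> 1" "(1 - 2 * r0) * (2 * x0 - 1) > 0"
  shows "unstable (ctrl_field a b c d \<mu> u) unit_square (x0, r0)"
  unfolding unstable_def lyapunov_stable_def
proof
  define \<sigma> where "\<sigma> = 1 - 2 * r0"
  define \<beta> where "\<beta> = \<sigma> * (2 * x0 - 1)"
  have \<sigma>: "\<bar>\<sigma>\<bar> = 1" using assms(2) unfolding \<sigma>_def by auto
  have "\<beta> > 0" using assms(5) unfolding \<beta>_def \<sigma>_def .
  have "\<bar>\<beta>\<bar> = \<bar>2 * x0 - 1\<bar>" unfolding \<beta>_def by (simp add: abs_mult \<sigma>)
  then have "\<beta> \<le> 1" using assms(3,4) by (simp add: abs_le_iff)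
  then have "\<beta> / 4 > 0" using \<open>\<beta> > 0\<close> by simp
  assume "\<forall>\<epsilon>>0. \<exists>\<delta>>0. \<forall>\<phi>. is_solution (ctrl_field a b c d \<mu> u) unit_square \<phi> \<and>
      dist (\<phi> 0) (x0, r0) < \<delta> \<longrightarrow> (\<forall>t\<ge>0. dist (\<phi> t) (x0, r0) < \<epsilon>)"
  then obtain \<delta> where "\<delta> > 0" and stable: "\<And>\<phi> t. is_solution (ctrl_field a b c d \<mu> u) unit_square \<phi> \<Longrightarrow>
      dist (\<phi> 0) (x0, r0) < \<delta> \<Longrightarrow> t \<ge> 0 \<Longrightarrow> dist (\<phi> t) (x0, r0) < \<beta> / 4"
    using \<open>\<beta> / 4 > 0\<close> by blast
  define \<eta> where "\<eta> = min (\<delta> / 2) (\<beta> / 8)"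
  have "\<eta> > 0" "\<eta> < \<delta>" "\<eta> < 1" using \<open>\<delta> > 0\<close> \<open>\<beta> > 0\<close> \<open>\<beta> \<le> 1\<close> unfolding \<eta>_def by auto
  have "(x0, r0 + \<sigma> * \<eta>) \<in> unit_square"
    using assms(2-4) \<open>\<eta> > 0\<close> \<open>\<eta> < 1\<close> unfolding unit_square_def \<sigma>_def by auto
  then obtain \<phi> where "\<phi> 0 = (x0, r0 + \<sigma> * \<eta>)" and sol: "is_solution (ctrl_field a b c d \<mu> u) unit_square \<phi>"
    using ctrl_field_solution_exists \<open>\<mu> > 0\<close> by (metis less_imp_le)
  define s where "s t = \<sigma> * (snd (\<phi> t) - r0)" for t
  have "dist (\<phi> 0) (x0, r0) < \<delta>"
    using \<open>\<phi> 0 = _\<close> \<open>\<eta> < \<delta>\<close> \<open>\<eta> > 0\<close> \<sigma> by (simp add: dist_Pair_Pair dist_real_def abs_mult)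
  then have near: "\<bar>fst (\<phi> t) - x0\<bar> < \<beta> / 4" "\<bar>s t\<bar> < \<beta> / 4" if "t \<ge> 0" for t
    using stable[OF sol _ that] dist_fst_le[of "\<phi> t" "(x0, r0)"] dist_snd_le[of "\<phi> t" "(x0, r0)"] \<sigma>
    unfolding s_def by (auto simp: dist_real_def abs_mult)
  have growth: "\<beta> / 4 * s t \<le> \<sigma> * snd (ctrl_field a b c d \<mu> u (\<phi> t))" if "t \<ge> 0" for t
  proof -
    obtain x r where \<phi>t: "\<phi> t = (x, r)" by fastforce
    have "0 \<le> r" "r \<le> 1" using sol that \<phi>t unfolding is_solution_def unit_square_def by force+
    have "\<sigma> * (2 * x - 1) = \<beta> + 2 * (\<sigma> * (x - x0))" unfolding \<beta>_def by algebra
    moreover have "\<bar>\<sigma> * (x - x0)\<bar> < \<beta> / 4" using near(1)[OF that] \<phi>t \<sigma> by (simp add: abs_mult)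
    ultimately have "\<beta> \<le> 2 * (\<sigma> * (2 * x - 1))" by (simp add: abs_less_iff)
    moreover have "\<sigma> * (r - r0) \<le> 1/2" using near(2)[OF that] \<phi>t \<open>\<beta> \<le> 1\<close> unfolding s_def by simp
    ultimately show ?thesis
      using ctrl_field_edge_repulsion[OF assms(2) \<open>0 \<le> r\<close> \<open>r \<le> 1\<close>] \<open>\<beta> > 0\<close> \<phi>t
      unfolding s_def \<sigma>_def by simp
  qed
  have "\<sigma> * \<sigma> = 1" using \<sigma> abs_mult_self_eq[of \<sigma>] by simp
  then have "s 0 > 0" using \<open>\<phi> 0 = _\<close> \<open>\<eta> > 0\<close> unfolding s_def by (simp flip: mult.assoc)
  moreover have deriv: "(s has_real_derivative \<sigma> * snd (ctrl_field a b c d \<mu> u (\<phi> t))) (at t within {0..})"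
    if "t \<ge> 0" for t
    unfolding s_def using is_solution_has_real_derivative(2)[OF sol that]
    by (auto intro!: derivative_eq_intros)
  ultimately obtain T where "T \<ge> 0" "s T \<ge> \<beta> / 4"
    using deriv_ge_mult_imp_unbounded_Ici[OF deriv growth \<open>\<beta> / 4 > 0\<close>] by blast
  then show False using near(2)[OF \<open>T \<ge> 0\<close>] by simp
qed

lemma lyapunov_stable_if_lyapunov_nonincreasing:
  fixes V :: "'a::real_normed_vector \<Rightarrow> real"
  assumes small: "\<And>\<eta>. \<eta> > 0 \<Longrightarrow> \<exists>\<delta>>0. \<forall>z\<in>S. dist z p < \<delta> \<longrightarrow> V z < \<eta>"
    and coercive: "\<And>\<epsilon>. \<epsilon> > 0 \<Longrightarrow> \<exists>\<eta>>0. \<forall>z\<in>S. V z < \<eta> \<longrightarrow> dist z p < \<epsilon>"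
    and "v0 > 0"
    and nonincreasing: "\<And>\<phi> t. is_solution f S \<phi> \<Longrightarrow> V (\<phi> 0) < v0 \<Longrightarrow> t \<ge> 0 \<Longrightarrow> V (\<phi> t) \<le> V (\<phi> 0)"
  shows "lyapunov_stable f S p"
  unfolding lyapunov_stable_def
proof (intro allI impI)
  fix \<epsilon> :: real assume "\<epsilon> > 0"
  obtain \<eta> where "\<eta> > 0" and \<eta>: "\<forall>z\<in>S. V z < \<eta> \<longrightarrow> dist z p < \<epsilon>"
    using coercive[OF \<open>\<epsilon> > 0\<close>] by blast
  obtain \<delta> where "\<delta> > 0" and \<delta>: "\<forall>z\<in>S. dist z p < \<delta> \<longrightarrow> V z < min \<eta> v0"
    using small[of "min \<eta> v0"] \<open>\<eta> > 0\<close> \<open>v0 > 0\<close> by auto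
  show "\<exists>\<delta>>0. \<forall>\<phi>. is_solution f S \<phi> \<and> dist (\<phi> 0) p < \<delta> \<longrightarrow> (\<forall>t\<ge>0. dist (\<phi> t) p < \<epsilon>)"
  proof (intro exI[of _ \<delta>] conjI allI impI \<open>\<delta> > 0\<close>)
    fix \<phi> and t :: real
    assume "is_solution f S \<phi> \<and> dist (\<phi> 0) p < \<delta>" "t \<ge> 0"
    then have sol: "is_solution f S \<phi>" and "V (\<phi> 0) < \<eta>" "V (\<phi> 0) < v0"
      using \<delta> unfolding is_solution_def by auto
    then have "V (\<phi> t) < \<eta>" using nonincreasing[OF sol _ \<open>t \<ge> 0\<close>] by fastforce
    then show "dist (\<phi> t) p < \<epsilon>" using \<eta> sol \<open>t \<ge> 0\<close> unfolding is_solution_def by blast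
  qed
qed

lemma tendsto_if_coercive_lyapunov_tendsto_zero:
  fixes V :: "'a::metric_space \<Rightarrow> real" and \<phi> :: "real \<Rightarrow> 'a"
  assumes coercive: "\<And>\<epsilon>. \<epsilon> > 0 \<Longrightarrow> \<exists>\<eta>>0. \<forall>z\<in>S. V z < \<eta> \<longrightarrow> dist z p < \<epsilon>"
    and "\<And>t. t \<ge> 0 \<Longrightarrow> \<phi> t \<in> S" and "((\<lambda>t. V (\<phi> t)) \<longlongrightarrow> 0) at_top"
  shows "(\<phi> \<longlongrightarrow> p) at_top"
proof (rule tendstoI)
  fix \<epsilon> :: real assume "\<epsilon> > 0"
  obtain \<eta> where "\<eta> > 0" and \<eta>: "\<forall>z\<in>S. V z < \<eta> \<longrightarrow> dist z p < \<epsilon>"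
    using coercive[OF \<open>\<epsilon> > 0\<close>] by blast
  have "\<forall>\<^sub>F t in at_top. V (\<phi> t) < \<eta> \<and> t \<ge> 0"
    using order_tendstoD(2)[OF assms(3) \<open>\<eta> > 0\<close>] eventually_ge_at_top[of 0] by (rule eventually_conj)
  then show "\<forall>\<^sub>F t in at_top. dist (\<phi> t) p < \<epsilon>"
    by (rule eventually_mono) (use \<eta> assms(2) in blast)
qed

lemma loc_asympt_stable_if_exp_lyapunov:
  fixes V :: "'a::real_normed_vector \<Rightarrow> real"
  assumes "continuous (at p within S) V" "V p = 0"
    and nonneg: "\<And>z. z \<in> S \<Longrightarrow> V z \<ge> 0"
    and coercive: "\<And>\<epsilon>. \<epsilon> > 0 \<Longrightarrow> \<exists>\<eta>>0. \<forall>z\<in>S. V z < \<eta> \<longrightarrow> dist z p < \<epsilon>"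
    and "\<gamma> > 0" "v0 > 0"
    and decay: "\<And>\<phi> t. is_solution f S \<phi> \<Longrightarrow> V (\<phi> 0) < v0 \<Longrightarrow> t \<ge> 0 \<Longrightarrow>
      V (\<phi> t) \<le> V (\<phi> 0) * exp (- (\<gamma> * t))"
  shows "loc_asympt_stable f S p"
proof -
  have small: "\<exists>\<delta>>0. \<forall>z\<in>S. dist z p < \<delta> \<longrightarrow> V z < \<eta>" if "\<eta> > 0" for \<eta>
    using assms(1,2) that unfolding continuous_within_eps_delta
    by (simp add: dist_real_def) (meson abs_less_iff)
  have in_S: "\<phi> t \<in> S" if "is_solution f S \<phi>" "t \<ge> 0" for \<phi> t
    using that unfolding is_solution_def by blast
  have "V (\<phi> 0) * exp (- (\<gamma> * t)) \<le> V (\<phi> 0)" if "is_solution f S \<phi>" "t \<ge> 0" for \<phi> t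
    using nonneg[OF in_S[OF that(1), of 0]] \<open>\<gamma> > 0\<close> that(2) mult_left_mono[of _ 1 "V (\<phi> 0)"] by simp
  then have "lyapunov_stable f S p"
    using decay by (intro lyapunov_stable_if_lyapunov_nonincreasing[OF small coercive \<open>v0 > 0\<close>]) force+
  moreover obtain \<delta> where "\<delta> > 0" and \<delta>: "\<forall>z\<in>S. dist z p < \<delta> \<longrightarrow> V z < v0"
    using small[OF \<open>v0 > 0\<close>] by blast
  have "(\<phi> \<longlongrightarrow> p) at_top" if sol: "is_solution f S \<phi>" and "dist (\<phi> 0) p < \<delta>" for \<phi>
  proof (rule tendsto_if_coercive_lyapunov_tendsto_zero[OF coercive in_S[OF sol]])
    have "V (\<phi> 0) < v0" using \<delta> in_S[OF sol, of 0] that(2) by auto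
    have "LIM t at_top. \<gamma> * t :> at_top"
      by (rule filterlim_tendsto_pos_mult_at_top[OF tendsto_const \<open>\<gamma> > 0\<close> filterlim_ident])
    then have "((\<lambda>t. V (\<phi> 0) * exp (- (\<gamma> * t))) \<longlongrightarrow> V (\<phi> 0) * 0) at_top"
      by (intro tendsto_mult_left filterlim_compose[OF exp_at_bot])
        (simp add: filterlim_uminus_at_bot)
    moreover have "\<forall>\<^sub>F t in at_top. 0 \<le> V (\<phi> t)"
      using eventually_ge_at_top[of 0] by (rule eventually_mono) (use nonneg in_S[OF sol] in blast)
    moreover have "\<forall>\<^sub>F t in at_top. V (\<phi> t) \<le> V (\<phi> 0) * exp (- (\<gamma> * t))"
      using eventually_ge_at_top[of 0] by (rule eventually_mono) (rule decay[OF sol \<open>V (\<phi> 0) < v0\<close>])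
    ultimately show "((\<lambda>t. V (\<phi> t)) \<longlongrightarrow> 0) at_top"
      using tendsto_sandwich[OF _ _ tendsto_const] by simp
  qed
  ultimately show ?thesis
    unfolding loc_asympt_stable_def using \<open>\<delta> > 0\<close> by blast
qed

lemma top_edge_drift_mult_le:
  assumes "top_edge_drift c d \<mu> u xs = 0" "top_edge_quotient c d \<mu> u xs x \<le> - \<alpha>"
  shows "2 * (x - xs) * top_edge_drift c d \<mu> u x \<le> - 2 * \<alpha> * (x - xs)^2"
proof -
  have "2 * (x - xs) * top_edge_drift c d \<mu> u x = 2 * (x - xs)^2 * top_edge_quotient c d \<mu> u xs x"
    using top_edge_drift_diff[of c d \<mu> u x xs] assms(1) by (simp add: power2_eq_square)
  also have "\<dots> \<le> 2 * (x - xs)^2 * (- \<alpha>)"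
    using assms(2) by (intro mult_left_mono) auto
  finally show ?thesis by (simp add: mult_ac)
qed

lemma coupling_coefficient_bounds:
  fixes a b c d x :: real
  assumes "0 \<le> a" "0 \<le> b" "0 \<le> c" "0 \<le> d" "0 \<le> x" "x \<le> 1"
  shows "0 \<le> x * (1 - x) * ((d + b) * (1 - x) + x * (c + a))"
    and "x * (1 - x) * ((d + b) * (1 - x) + x * (c + a)) \<le> a + b + c + d"
proof -
  have factors: "0 \<le> x * (1 - x)" "x * (1 - x) \<le> 1" "0 \<le> (d + b) * (1 - x) + x * (c + a)"
    using assms mult_le_one[of x "1 - x"] by auto
  then show "0 \<le> x * (1 - x) * ((d + b) * (1 - x) + x * (c + a))" by simp
  have "(d + b) * (1 - x) \<le> d + b" "x * (c + a) \<le> c + a"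
    using assms by (simp_all add: mult_left_le mult_left_le_one_le)
  then have "(d + b) * (1 - x) + x * (c + a) \<le> a + b + c + d" by linarith
  then show "x * (1 - x) * ((d + b) * (1 - x) + x * (c + a)) \<le> a + b + c + d"
    using factors mult_mono[of "x * (1 - x)" 1] by fastforce
qed

text \<open>For \<open>K (xs - 1/2) = 4 (a + b + c + d)\<close>, the repulsion \<open>K r (1 - r) (2 x - 1)\<close> of \<open>r\<close> from
  the top edge dominates the term \<open>(1 - r) x (1 - x) ((d + b) (1 - x) + x (c + a))\<close> coupling
  \<open>x'\<close> to \<open>r\<close>.\<close>
lemma ctrl_field_lyapunov_derivative_le:
  assumes "a > 0" "b > 0" "c > 0" "d > 0" "1/2 < xs" "xs \<le> 1" "top_edge_drift c d \<mu> u xs = 0"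
    and quotient: "\<And>y. 1/2 \<le> y \<Longrightarrow> y \<le> 1 \<Longrightarrow> top_edge_quotient c d \<mu> u xs y \<le> - \<alpha>"
    and "0 \<le> x" "x \<le> 1" "1/2 < r" "r \<le> 1" "\<bar>x - xs\<bar> < (xs - 1/2) / 2"
    and K: "K * (xs - 1/2) = 4 * (a + b + c + d)"
    and \<gamma>: "0 \<le> \<gamma>" "\<gamma> \<le> 2 * \<alpha>" "\<gamma> * K \<le> a + b + c + d"
  shows "2 * (x - xs) * fst (ctrl_field a b c d \<mu> u (x, r)) - K * snd (ctrl_field a b c d \<mu> u (x, r))
    \<le> - \<gamma> * ((x - xs)^2 + K * (1 - r))"
proof -
  define M where "M = a + b + c + d"
  define m where "m = x * (1 - x) * ((d + b) * (1 - x) + x * (c + a))"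
  have close: "2 * (xs - x) < xs - 1/2" "2 * (x - xs) < xs - 1/2"
    using abs_less_iff[THEN iffD1, OF assms(13)] by auto
  have "0 < K * (xs - 1/2)" using K assms(1-4) by simp
  then have "K > 0" using assms(5) by (simp add: zero_less_mult_iff)
  have m: "0 \<le> m" "m \<le> M"
    using coupling_coefficient_bounds[of a b c d x] assms(1-4,9,10) unfolding m_def M_def by auto
  have "1/2 \<le> x" using close assms(5) by (simp add: algebra_simps)
  have drift: "2 * (x - xs) * top_edge_drift c d \<mu> u x \<le> - 2 * \<alpha> * (x - xs)^2"
    by (rule top_edge_drift_mult_le[OF assms(7) quotient[OF \<open>1/2 \<le> x\<close> \<open>x \<le> 1\<close>]])
  have "2 * (x - xs) \<le> 1" using close(2) assms(6) by simp
  then have "2 * (x - xs) * m \<le> 1 * m" using m(1) by (rule mult_right_mono)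
  then have "2 * (x - xs) * m \<le> M" using m(2) by simp
  then have coupling: "2 * (x - xs) * ((1 - r) * m) \<le> (1 - r) * M"
    using assms(12) mult_left_mono[of "2 * (x - xs) * m" M "1 - r"] by (simp add: algebra_simps)
  have "2 * x - 1 \<ge> xs - 1/2" using close by (simp add: algebra_simps)
  then have "(1/2) * (xs - 1/2) \<le> r * (2 * x - 1)"
    using assms(5,11) by (intro mult_mono) auto
  have "2 * M * (1 - r) = (1 - r) / 2 * (K * (xs - 1/2))" using K unfolding M_def by simp
  also have "\<dots> = K * ((1 - r) * ((1/2) * (xs - 1/2)))" by (simp add: algebra_simps)
  also have "\<dots> \<le> K * ((1 - r) * (r * (2 * x - 1)))"
    using \<open>K > 0\<close> assms(12) \<open>(1/2) * (xs - 1/2) \<le> r * (2 * x - 1)\<close> by (intro mult_left_mono) auto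
  finally have repulsion: "2 * M * (1 - r) \<le> K * (r * (1 - r) * (2 * x - 1))"
    by (simp add: mult_ac)
  have "\<gamma> * (x - xs)^2 \<le> 2 * \<alpha> * (x - xs)^2" "\<gamma> * K * (1 - r) \<le> M * (1 - r)"
    using \<gamma> assms(12) unfolding M_def by (auto intro: mult_right_mono)
  then show ?thesis
    using drift coupling repulsion unfolding fst_ctrl_field_eq m_def[symmetric]
    by (simp add: ctrl_field_def algebra_simps)
qed

definition top_lyapunov :: "real \<Rightarrow> real \<Rightarrow> real \<times> real \<Rightarrow> real" where
  "top_lyapunov xs K z = (fst z - xs)^2 + K * (1 - snd z)"

lemma top_lyapunov_sublevel:
  assumes "K > 0" "1/2 < xs" "r \<le> 1" "top_lyapunov xs K (x, r) < v0"
    and "v0 \<le> ((xs - 1/2) / 2)^2" "v0 \<le> K / 2"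
  shows "\<bar>x - xs\<bar> < (xs - 1/2) / 2" "1/2 < r"
proof -
  have "(x - xs)^2 + K * (1 - r) < v0" "0 \<le> K * (1 - r)"
    using assms(1,3,4) unfolding top_lyapunov_def by auto
  then have "(x - xs)^2 < ((xs - 1/2) / 2)^2" "K * (1 - r) < K * (1/2)"
    using assms(5,6) zero_le_power2[of "x - xs"] by linarith+
  then show "\<bar>x - xs\<bar> < (xs - 1/2) / 2" "1/2 < r"
    using power2_less_imp_less[of "\<bar>x - xs\<bar>" "(xs - 1/2) / 2"] assms(2)
      mult_less_cancel_left_pos[OF \<open>K > 0\<close>, of "1 - r" "1/2"] by auto
qed

lemma ctrl_field_top_lyapunov_decay:
  assumes "a > 0" "b > 0" "c > 0" "d > 0" "1/2 < xs" "xs \<le> 1" "top_edge_drift c d \<mu> u xs = 0"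
    and quotient: "\<And>y. 1/2 \<le> y \<Longrightarrow> y \<le> 1 \<Longrightarrow> top_edge_quotient c d \<mu> u xs y \<le> - \<alpha>"
    and K: "K * (xs - 1/2) = 4 * (a + b + c + d)"
    and \<gamma>: "0 \<le> \<gamma>" "\<gamma> \<le> 2 * \<alpha>" "\<gamma> * K \<le> a + b + c + d"
    and v0: "v0 \<le> ((xs - 1/2) / 2)^2" "v0 \<le> K / 2"
    and sol: "is_solution (ctrl_field a b c d \<mu> u) unit_square \<phi>"
    and init: "top_lyapunov xs K (\<phi> 0) < v0" and "t \<ge> 0"
  shows "top_lyapunov xs K (\<phi> t) \<le> top_lyapunov xs K (\<phi> 0) * exp (- (\<gamma> * t))"
proof -
  define F where "F = ctrl_field a b c d \<mu> u"
  define v where "v t = top_lyapunov xs K (\<phi> t)" for t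
  define v' where "v' t = 2 * (fst (\<phi> t) - xs) * fst (F (\<phi> t)) - K * snd (F (\<phi> t))" for t
  have "0 < K * (xs - 1/2)" using K assms(1-4) by simp
  then have "K > 0" using assms(5) by (simp add: zero_less_mult_iff)
  have deriv: "(v has_real_derivative v' t) (at t within {0..})" if "t \<ge> 0" for t
    unfolding v_def v'_def top_lyapunov_def F_def
    using is_solution_has_real_derivative[OF sol that]
    by (auto intro!: derivative_eq_intros)
  have square: "\<phi> t \<in> unit_square" if "t \<ge> 0" for t
    using sol that unfolding is_solution_def by blast
  have nonneg: "v t \<ge> 0" if "t \<ge> 0" for t
    using square[OF that] \<open>K > 0\<close> unfolding v_def top_lyapunov_def unit_square_def
    by (auto simp: mem_Times_iff)
  have decrease: "v' t \<le> - \<gamma> * v t" if "t \<ge> 0" "v t < v0" for t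
  proof -
    obtain x r where \<phi>t: "\<phi> t = (x, r)" by fastforce
    have "x \<in> {0..1}" "r \<in> {0..1}" using square[OF that(1)] \<phi>t unfolding unit_square_def by auto
    then show ?thesis
      using ctrl_field_lyapunov_derivative_le[OF assms(1-7) quotient _ _ _ _ _ K \<gamma>]
        top_lyapunov_sublevel[OF \<open>K > 0\<close> assms(5) _ _ v0, of r x] that(2) \<phi>t
      unfolding v'_def v_def F_def top_lyapunov_def by auto
  qed
  have "v' s \<le> 0" if "s \<ge> 0" "v s < v0" for s
    using decrease[OF that] mult_nonneg_nonneg[OF \<open>\<gamma> \<ge> 0\<close> nonneg[OF that(1)]] by linarith
  then have "v s \<le> v 0" if "s \<ge> 0" for s
    using deriv_nonpos_below_imp_decreasing_Ici[OF deriv _ _ that] init unfolding v_def by blast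
  then have "- v' s \<ge> (- \<gamma>) * (- v s)" if "s \<ge> 0" for s
    using decrease[OF that] init that unfolding v_def by force
  then have "(- v 0) * exp ((- \<gamma>) * t) \<le> - v t"
    using DERIV_minus[OF deriv] by (intro deriv_ge_mult_imp_exp_lower_bound_Ici[OF _ _ \<open>t \<ge> 0\<close>])
  then show ?thesis unfolding v_def by simp
qed

lemma top_lyapunov_coercive:
  assumes "K > 0" "\<epsilon> > 0"
  shows "\<exists>\<eta>>0. \<forall>z\<in>unit_square. top_lyapunov xs K z < \<eta> \<longrightarrow> dist z (xs, 1) < \<epsilon>"
proof (intro exI conjI ballI impI)
  show "min ((\<epsilon> / 2)^2) (K * (\<epsilon> / 2)) > 0" using assms by simp
  fix z :: "real \<times> real" assume "z \<in> unit_square" "top_lyapunov xs K z < min ((\<epsilon> / 2)^2) (K * (\<epsilon> / 2))"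
  moreover obtain x r where z: "z = (x, r)" by fastforce
  ultimately have "r \<le> 1" "(x - xs)^2 + K * (1 - r) < (\<epsilon> / 2)^2" "(x - xs)^2 + K * (1 - r) < K * (\<epsilon> / 2)"
    unfolding unit_square_def top_lyapunov_def by auto
  moreover have "0 \<le> K * (1 - r)" using \<open>r \<le> 1\<close> \<open>K > 0\<close> by simp
  ultimately have "(x - xs)^2 < (\<epsilon> / 2)^2" "K * (1 - r) < K * (\<epsilon> / 2)"
    using zero_le_power2[of "x - xs"] by linarith+
  then have "\<bar>x - xs\<bar> < \<epsilon> / 2" "\<bar>r - 1\<bar> < \<epsilon> / 2"
    using power2_less_imp_less[of "\<bar>x - xs\<bar>" "\<epsilon> / 2"] \<open>\<epsilon> > 0\<close> \<open>r \<le> 1\<close>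
      mult_less_cancel_left_pos[OF \<open>K > 0\<close>, of "1 - r" "\<epsilon> / 2"] by auto
  moreover have "dist z (xs, 1) \<le> \<bar>x - xs\<bar> + \<bar>r - 1\<bar>"
    using norm_Pair_le[of "x - xs" "r - 1"] unfolding z dist_norm by simp
  ultimately show "dist z (xs, 1) < \<epsilon>" by linarith
qed

lemma ctrl_field_top_equilibrium_loc_asympt_stable:
  assumes "a > 0" "b > 0" "c > 0" "d > 0" "\<mu> > 0" "u > (c + d) / 2"
    and "1/2 < xs" "xs < 1" "top_edge_drift c d \<mu> u xs = 0"
  shows "loc_asympt_stable (ctrl_field a b c d \<mu> u) unit_square (xs, 1)"
proof -
  obtain \<alpha> where "\<alpha> > 0"
    and quotient: "\<And>y. 1/2 \<le> y \<Longrightarrow> y \<le> 1 \<Longrightarrow> top_edge_quotient c d \<mu> u xs y \<le> - \<alpha>"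
    using top_edge_quotient_neg[OF assms(6,5,7-9)] by blast
  define M where "M = a + b + c + d"
  define K where "K = 4 * M / (xs - 1/2)"
  define \<gamma> where "\<gamma> = min (2 * \<alpha>) (M / K)"
  define v0 where "v0 = min (((xs - 1/2) / 2)^2) (K / 2)"
  have "M > 0" using assms(1-4) unfolding M_def by simp
  then have "K > 0" "K * (xs - 1/2) = 4 * M" using assms(7) unfolding K_def by auto
  have "\<gamma> > 0" "\<gamma> \<le> 2 * \<alpha>" "\<gamma> * K \<le> M"
    using \<open>\<alpha> > 0\<close> \<open>M > 0\<close> \<open>K > 0\<close> unfolding \<gamma>_def by (auto simp: min_def field_simps)
  have "v0 > 0" using \<open>K > 0\<close> assms(7) unfolding v0_def by simp
  show ?thesis
  proof (rule loc_asympt_stable_if_exp_lyapunov[where V = "top_lyapunov xs K"])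
    show "continuous (at (xs, 1) within unit_square) (top_lyapunov xs K)"
      unfolding top_lyapunov_def by (intro continuous_intros)
    show "top_lyapunov xs K (xs, 1) = 0" by (simp add: top_lyapunov_def)
    show "top_lyapunov xs K z \<ge> 0" if "z \<in> unit_square" for z
      using that \<open>K > 0\<close> unfolding top_lyapunov_def unit_square_def by (auto simp: mem_Times_iff)
    show "\<exists>\<eta>>0. \<forall>z\<in>unit_square. top_lyapunov xs K z < \<eta> \<longrightarrow> dist z (xs, 1) < \<epsilon>" if "\<epsilon> > 0" for \<epsilon>
      by (rule top_lyapunov_coercive[OF \<open>K > 0\<close> that])
    show "top_lyapunov xs K (\<phi> t) \<le> top_lyapunov xs K (\<phi> 0) * exp (- (\<gamma> * t))"
      if "is_solution (ctrl_field a b c d \<mu> u) unit_square \<phi>" "top_lyapunov xs K (\<phi> 0) < v0" "t \<ge> 0"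
      for \<phi> t
      using \<open>\<gamma> > 0\<close> \<open>\<gamma> \<le> 2 * \<alpha>\<close> \<open>\<gamma> * K \<le> M\<close> \<open>K * (xs - 1/2) = 4 * M\<close> assms
      by (intro ctrl_field_top_lyapunov_decay[OF _ _ _ _ _ _ _ quotient _ _ _ _ _ _ that])
        (auto simp: M_def v0_def)
  qed fact+
qed

theorem lemma19:
  fixes a b c d \<mu> u xs :: real
  assumes "a > 0" "b > 0" "c > 0" "d > 0"
    and "0 < \<mu>" "\<mu> \<le> 1"
    and "u > (c + d) / 2"
    and "1 / 2 < xs" "xs < 1"
    and "equilibrium (ctrl_field a b c d \<mu> u) unit_square (xs, 1)"
  shows "loc_asympt_stable (ctrl_field a b c d \<mu> u) unit_square (xs, 1)
    \<and> (\<forall>p. equilibrium (ctrl_field a b c d \<mu> u) unit_square p \<and> p \<noteq> (xs, 1)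
           \<longrightarrow> unstable (ctrl_field a b c d \<mu> u) unit_square p)"
proof -
  have drift: "top_edge_drift c d \<mu> u xs = 0"
    using assms(10) fst_ctrl_field_eq[of a b c d \<mu> u xs 1] by (simp add: equilibrium_def)
  have "unstable (ctrl_field a b c d \<mu> u) unit_square p"
    if eq: "equilibrium (ctrl_field a b c d \<mu> u) unit_square p" and "p \<noteq> (xs, 1)" for p
  proof -
    obtain x r where p: "p = (x, r)" by fastforce
    have "x \<in> {0..1}" using eq p by (simp add: equilibrium_def unit_square_def)
    have "r = 0 \<or> r = 1" by (rule ctrl_field_equilibrium_off_midline(2)[OF assms(1-4,7) eq[unfolded p]])
    then have "(1 - 2 * r) * (2 * x - 1) > 0"
      using ctrl_field_equilibrium_bottom_edge[OF assms(1-5,7), of x]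
        ctrl_field_equilibrium_top_edge[OF assms(1-5,7-9) drift, of x] eq \<open>p \<noteq> (xs, 1)\<close> p
      by auto
    then show ?thesis
      using ctrl_field_edge_equilibrium_unstable[OF assms(5) \<open>r = 0 \<or> r = 1\<close>] \<open>x \<in> {0..1}\<close> p by simp
  qed
  with ctrl_field_top_equilibrium_loc_asympt_stable[OF assms(1-5,7-9) drift] show ?thesis by blast
qed

end
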